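(* Let $A\subset\Pi$, $\alpha_i\in\Pi\setminus A$ and $\epsilon=(\epsilon_1,\dots,\epsilon_l)\in\mathcal E^A$. (a) If $\epsilon_i=1$ then $s_{\alpha_i}h_\epsilon=h_\epsilon$. If $\epsilon_i=-1$ then $s_{\alpha_i}h_\epsilon=h_{\epsilon'}$ with $\epsilon'_j=\epsilon_j\epsilon_i^{-C_{j,i}}$; moreover $h_{\epsilon'}$ factors as $h_{\epsilon'}=\big(\prod_{\alpha_j\in A,\ C_{j,i}\text{ odd}}h_j\big)h_{\epsilon_A}$ for some $\epsilon_A\in\mathcal E^A$. (b) If $\epsilon_i=1$ then $s_{\alpha_i}(h_\epsilon H^A)\subset h_\epsilon H^A$. If $\epsilon_i=-1$ then $s_{\alpha_i}(h_\epsilon H^A)\subset h_{\epsilon'}H^A$ with $\epsilon'$ as in (a), and $h_{\epsilon'}$ factors as in (a). (c) For every $k$, every $h\in H_\epsilon:=h_\epsilon H$ and every $h'\in s_{\alpha_i}(H_\epsilon)$, the sign $\epsilon_k$ of $\chi_{\alpha_k}(h)$ equals the sign of $\chi_{s_{\alpha_i}\alpha_k}(h')$.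
   Context: $\mathfrak g$ is a real split semisimple Lie algebra of rank $l$, $\mathfrak h$ a split Cartan subalgebra, $\Pi=\{\alpha_1,\dots,\alpha_l\}$ simple roots, $h_{\alpha_j}$ coroots, $C_{i,j}=\alpha_i(h_{\alpha_j})$. $G_{\mathbb C}$ is the connected adjoint group of $\mathfrak g\otimes\mathbb C$, $H_{\mathbb C}$ its Cartan subgroup with Lie algebra $\mathfrak h\otimes\mathbb C$, $\tilde G=\{g\in G_{\mathbb C}:\mathrm{Ad}(g)\mathfrak g\subset\mathfrak g\}$, $H_{\mathbb R}=H_{\mathbb C}\cap\tilde G$, $H=\exp\mathfrak h$, and $\chi_\phi$ denotes the root character of $\phi$ ($\mathrm{Ad}(h)e_\phi=\chi_\phi(h)e_\phi$), real and nonzero on $H_{\mathbb R}$. Let $y_i\in\mathfrak h$ with $\alpha_j(y_i)=\pi\delta_{ij}$, $h_i=\exp(\sqrt{-1}y_i)$, $h_\epsilon=\prod_{i:\epsilon_i=-1}h_i$ for $\epsilon\in\{\pm1\}^l$. For $A\subset\Pi$: $\mathcal E^A=\{\epsilon\in\{\pm1\}^l:\epsilon_j=1\text{ whenever }\alpha_j\in A\}$, and $H^A=\exp(\mathfrak h^A)$ with $\mathfrak h^A$ the real span of $h_{\alpha_j}$, $\alpha_j\notin A$. The Weyl group acts on $H_{\mathbb R}$ by conjugation by normalizer representatives. *)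

theory Defs
  imports Complex_Main
begin

text \<open>Simple roots are indexed by 0..<l.  Since the root lattice is the character
  lattice of the Cartan subgroup H_C of the adjoint group, the map
  h |-> (chi_{alpha_0}(h),...,chi_{alpha_{l-1}}(h)) identifies H_C with (C^*)^l.
  An element of H_C is represented by its vector of simple-root character values
  (normalised to 1 outside 0..<l).\<close>

text \<open>Cartan matrix C i j = alpha_i(h_{alpha_j}) of a semisimple Lie algebra of rank l:
  integer entries, 2 on the diagonal, nonpositive off-diagonal, symmetrisable
  with positive definite symmetrisation (finite type).\<close>
definition cartan_matrix :: "nat \<Rightarrow> (nat \<Rightarrow> nat \<Rightarrow> int) \<Rightarrow> bool" where
  "cartan_matrix l C \<longleftrightarrow>
     (\<forall>i<l. C i i = 2) \<and>
     (\<forall>i<l. \<forall>j<l. i \<noteq> j \<longrightarrow> C i j \<le> 0) \<and>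
     (\<forall>i<l. \<forall>j<l. C i j = 0 \<longleftrightarrow> C j i = 0) \<and>
     (\<exists>d::nat \<Rightarrow> real. (\<forall>i<l. d i > 0) \<and>
        (\<forall>i<l. \<forall>j<l. of_int (C i j) * d j = of_int (C j i) * d i) \<and>
        (\<forall>x::nat \<Rightarrow> real. (\<exists>j<l. x j \<noteq> 0) \<longrightarrow>
            (\<Sum>i<l. \<Sum>j<l. x i * of_int (C i j) * d j * x j) > 0))"

definition torus :: "nat \<Rightarrow> (nat \<Rightarrow> complex) set" where
  "torus l = {h. (\<forall>j<l. h j \<noteq> 0) \<and> (\<forall>j\<ge>l. h j = 1)}"

definition tmult :: "(nat \<Rightarrow> complex) \<Rightarrow> (nat \<Rightarrow> complex) \<Rightarrow> (nat \<Rightarrow> complex)" where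
  "tmult h g = (\<lambda>k. h k * g k)"

definition tprod :: "nat set \<Rightarrow> (nat \<Rightarrow> nat \<Rightarrow> complex) \<Rightarrow> (nat \<Rightarrow> complex)" where
  "tprod S f = (\<lambda>k. \<Prod>j\<in>S. f j k)"

definition tcoset :: "(nat \<Rightarrow> complex) \<Rightarrow> (nat \<Rightarrow> complex) set \<Rightarrow> (nat \<Rightarrow> complex) set" where
  "tcoset h S = tmult h ` S"

text \<open>Roots as coefficient vectors w.r.t. the simple roots; root character chi_phi.\<close>
definition simple_root :: "nat \<Rightarrow> nat \<Rightarrow> int" where
  "simple_root i = (\<lambda>j. if j = i then 1 else 0)"

definition root_char :: "nat \<Rightarrow> (nat \<Rightarrow> int) \<Rightarrow> (nat \<Rightarrow> complex) \<Rightarrow> complex" where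
  "root_char l \<phi> h = (\<Prod>j<l. h j powi \<phi> j)"

text \<open>Simple reflection on roots: s_i(phi) = phi - phi(h_{alpha_i}) alpha_i.\<close>
definition root_refl :: "nat \<Rightarrow> (nat \<Rightarrow> nat \<Rightarrow> int) \<Rightarrow> nat \<Rightarrow> (nat \<Rightarrow> int) \<Rightarrow> (nat \<Rightarrow> int)" where
  "root_refl l C i \<phi> = (\<lambda>j. if j = i then \<phi> j - (\<Sum>m<l. \<phi> m * C m i) else \<phi> j)"

text \<open>Action of the simple Weyl reflection on H_C (conjugation by a normaliser
  representative): chi_{alpha_k}(s_i h) = chi_{s_i alpha_k}(h).\<close>
definition weyl_s :: "nat \<Rightarrow> (nat \<Rightarrow> nat \<Rightarrow> int) \<Rightarrow> nat \<Rightarrow> (nat \<Rightarrow> complex) \<Rightarrow> (nat \<Rightarrow> complex)" where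
  "weyl_s l C i h = (\<lambda>k. if k < l then root_char l (root_refl l C i (simple_root k)) h else 1)"

text \<open>alpha_k(x) for x = sum_j x_j h_{alpha_j} in h (or h tensor C).\<close>
definition alpha_val :: "nat \<Rightarrow> (nat \<Rightarrow> nat \<Rightarrow> int) \<Rightarrow> nat \<Rightarrow> (nat \<Rightarrow> 'a::comm_ring_1) \<Rightarrow> 'a" where
  "alpha_val l C k x = (\<Sum>j<l. x j * of_int (C k j))"

text \<open>Exponential map h tensor C -> H_C: chi_{alpha_k}(exp x) = e^{alpha_k(x)}.\<close>
definition texp :: "nat \<Rightarrow> (nat \<Rightarrow> nat \<Rightarrow> int) \<Rightarrow> (nat \<Rightarrow> complex) \<Rightarrow> (nat \<Rightarrow> complex)" where
  "texp l C z = (\<lambda>k. if k < l then exp (alpha_val l C k z) else 1)"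

definition y_vec :: "nat \<Rightarrow> (nat \<Rightarrow> nat \<Rightarrow> int) \<Rightarrow> nat \<Rightarrow> (nat \<Rightarrow> real)" where
  "y_vec l C i = (THE x. (\<forall>k<l. alpha_val l C k x = (if k = i then pi else 0)) \<and> (\<forall>j\<ge>l. x j = 0))"

definition h_gen :: "nat \<Rightarrow> (nat \<Rightarrow> nat \<Rightarrow> int) \<Rightarrow> nat \<Rightarrow> (nat \<Rightarrow> complex)" where
  "h_gen l C i = texp l C (\<lambda>j. \<i> * of_real (y_vec l C i j))"

definition h_eps :: "nat \<Rightarrow> (nat \<Rightarrow> nat \<Rightarrow> int) \<Rightarrow> (nat \<Rightarrow> real) \<Rightarrow> (nat \<Rightarrow> complex)" where
  "h_eps l C \<epsilon> = tprod {j. j < l \<and> \<epsilon> j = -1} (h_gen l C)"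

definition eps_set :: "nat \<Rightarrow> nat set \<Rightarrow> (nat \<Rightarrow> real) set" where
  "eps_set l A = {\<epsilon>. (\<forall>j<l. \<epsilon> j = 1 \<or> \<epsilon> j = -1) \<and> (\<forall>j\<in>A. \<epsilon> j = 1)}"

text \<open>H = exp(h) and H^A = exp(h^A), h^A = real span of h_{alpha_j}, alpha_j not in A.\<close>
definition H_split :: "nat \<Rightarrow> (nat \<Rightarrow> nat \<Rightarrow> int) \<Rightarrow> (nat \<Rightarrow> complex) set" where
  "H_split l C = (\<lambda>x. texp l C (\<lambda>j. complex_of_real (x j))) ` {x. \<forall>j\<ge>l. x j = 0}"

definition H_A :: "nat \<Rightarrow> (nat \<Rightarrow> nat \<Rightarrow> int) \<Rightarrow> nat set \<Rightarrow> (nat \<Rightarrow> complex) set" where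
  "H_A l C A = (\<lambda>x. texp l C (\<lambda>j. complex_of_real (x j))) ` {x. \<forall>j. (l \<le> j \<or> j \<in> A) \<longrightarrow> x j = 0}"

end

theory Submission imports Defs "Jordan_Normal_Form.Determinant"
begin

text \<open>A point h of the torus is recorded by its simple-root characters, and the simple
  reflection acts by \<open>\<chi>\<^sub>k(s\<^sub>i h) = \<chi>\<^sub>k(h) \<chi>\<^sub>i(h) powi (- C k i)\<close>. This action is multiplicative,
  and it is an involution because \<open>C i i = 2\<close>. Nondegeneracy of the Cartan matrix makes
  \<open>y\<^sub>i\<close> exist, so \<open>h\<^sub>i\<close> has character \<open>-1\<close> at \<open>\<alpha>\<^sub>i\<close> and \<open>1\<close> elsewhere, and \<open>h\<^sub>\<epsilon>\<close> is the
  point with characters \<open>\<epsilon>\<close>; this gives (a). On \<open>exp x\<close> the reflection acts through the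
  reflection \<open>x - \<alpha>\<^sub>i(x) h\<^sub>\<alpha>\<^sub>i\<close> of the Cartan subalgebra, which preserves the span defining
  \<open>H\<^sup>A\<close> because \<open>\<alpha>\<^sub>i \<notin> A\<close>; with multiplicativity this gives (b). For (c), involutivity
  turns the character of \<open>s\<^sub>i \<alpha>\<^sub>k\<close> at \<open>s\<^sub>i g\<close> into \<open>\<chi>\<^sub>k(g)\<close>, and on \<open>h\<^sub>\<epsilon> H\<close> the character
  \<open>\<chi>\<^sub>k\<close> equals \<open>\<epsilon>\<^sub>k\<close> times a real exponential.\<close>

lemma cartan_matrix_diag: "cartan_matrix l C \<Longrightarrow> i < l \<Longrightarrow> C i i = 2"
  unfolding cartan_matrix_def by blast

lemma alpha_val_diff:
  "alpha_val l C k (\<lambda>j. x j - z j) = alpha_val l C k x - alpha_val l C k z"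
  unfolding alpha_val_def by (simp add: left_diff_distrib sum_subtractf)

lemma alpha_val_of_real:
  "alpha_val l C k (\<lambda>j. of_real (x j)) = (of_real (alpha_val l C k x) :: 'a::{real_algebra_1,comm_ring_1})"
  unfolding alpha_val_def by simp

lemma alpha_val_nondegenerate:
  assumes "cartan_matrix l C" and "\<forall>k<l. alpha_val l C k w = (0::real)"
  shows "\<forall>j<l. w j = 0"
proof (rule ccontr)
  assume "\<not> (\<forall>j<l. w j = 0)"
  then obtain j0 where j0: "j0 < l" "w j0 \<noteq> 0" by auto
  obtain d where d_pos: "\<forall>i<l. d i > (0::real)"
    and definite: "\<forall>x::nat \<Rightarrow> real. (\<exists>j<l. x j \<noteq> 0) \<longrightarrow>
            (\<Sum>i<l. \<Sum>j<l. x i * of_int (C i j) * d j * x j) > 0"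
    using assms(1) unfolding cartan_matrix_def by blast
  \<comment> \<open>with \<open>x j = w j / d j\<close> the symmetrised form becomes \<open>\<Sum>i. x i * \<alpha>\<^sub>i(w)\<close>\<close>
  define x where "x j = w j / d j" for j
  have "\<exists>j<l. x j \<noteq> 0"
    using j0 d_pos by (intro exI[of _ j0]) (auto simp: x_def)
  with definite have pos: "(\<Sum>i<l. \<Sum>j<l. x i * of_int (C i j) * d j * x j) > 0" by blast
  have "(\<Sum>i<l. \<Sum>j<l. x i * of_int (C i j) * d j * x j) = (\<Sum>i<l. x i * alpha_val l C i w)"
    unfolding alpha_val_def sum_distrib_left
    using d_pos by (intro sum.cong refl) (auto simp: x_def field_simps)
  also have "\<dots> = 0" using assms(2) by simp
  finally show False using pos by simp
qed

lemma alpha_val_surjective: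
  assumes "cartan_matrix l C"
  shows "\<exists>x. (\<forall>k<l. alpha_val l C k x = b k) \<and> (\<forall>j\<ge>l. x j = (0::real))"
proof -
  define M :: "real mat" where "M = mat l l (\<lambda>(k,j). of_int (C k j))"
  have M: "M \<in> carrier_mat l l" unfolding M_def by simp
  define extend :: "real vec \<Rightarrow> nat \<Rightarrow> real" where "extend v j = (if j < l then v $ j else 0)" for v j
  have M_mult: "(M *\<^sub>v v) $ k = alpha_val l C k (extend v)" if "k < l" "v \<in> carrier_vec l" for k v
    using that unfolding M_def alpha_val_def extend_def
    by (auto simp: scalar_prod_def lessThan_atLeast0 mult.commute intro!: sum.cong)
  have "det M \<noteq> 0"
  proof
    assume "det M = 0"
    then obtain v where v: "v \<in> carrier_vec l" "v \<noteq> 0\<^sub>v l" "M *\<^sub>v v = 0\<^sub>v l"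
      using det_0_iff_vec_prod_zero_field[OF M] by blast
    have "\<forall>k<l. alpha_val l C k (extend v) = 0"
      using v(1,3) M_mult by (metis index_zero_vec(1))
    then have "\<forall>j<l. v $ j = 0"
      using alpha_val_nondegenerate[OF assms] unfolding extend_def by fastforce
    then have "v = 0\<^sub>v l" using v(1) by (intro eq_vecI) auto
    with v(2) show False by simp
  qed
  from det_non_zero_imp_unit[OF M this, of "()"]
  obtain B where B: "B \<in> carrier_mat l l" "M * B = 1\<^sub>m l"
    unfolding Units_def ring_mat_def by auto
  define b' where "b' = vec l b"
  define v where "v = B *\<^sub>v b'"
  have v: "v \<in> carrier_vec l" unfolding v_def b'_def using B by simp
  have "M *\<^sub>v v = b'" unfolding v_def b'_def
    using B M by (simp add: assoc_mult_mat_vec[symmetric, of M l l B l])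
  then have "\<forall>k<l. alpha_val l C k (extend v) = b k"
    using M_mult[OF _ v] by (simp add: b'_def)
  then show ?thesis by (intro exI[of _ "extend v"]) (simp add: extend_def)
qed

lemma alpha_val_y_vec:
  assumes "cartan_matrix l C" and "k < l"
  shows "alpha_val l C k (y_vec l C i) = (if k = i then pi else 0)"
proof -
  let ?P = "\<lambda>x. (\<forall>k<l. alpha_val l C k x = (if k = i then pi else 0)) \<and> (\<forall>j\<ge>l. x j = 0)"
  have "\<exists>!x. ?P x"
  proof (rule ex_ex1I)
    show "\<exists>x. ?P x" by (rule alpha_val_surjective[OF assms(1)])
  next
    fix x z assume "?P x" "?P z"
    then have "\<forall>k<l. alpha_val l C k (\<lambda>j. x j - z j) = 0"
      by (simp add: alpha_val_diff)
    from alpha_val_nondegenerate[OF assms(1) this] \<open>?P x\<close> \<open>?P z\<close> show "x = z"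
      by (metis eq_iff_diff_eq_0 ext not_le)
  qed
  then have "?P (y_vec l C i)"
    unfolding y_vec_def by (rule theI')
  with assms(2) show ?thesis by blast
qed

lemma h_gen_eq:
  assumes "cartan_matrix l C" and "i < l"
  shows "h_gen l C i = (\<lambda>k. if k = i then -1 else 1)"
proof
  fix k
  show "h_gen l C i k = (if k = i then -1 else 1)"
  proof (cases "k < l")
    case True
    have "alpha_val l C k (\<lambda>j. \<i> * complex_of_real (y_vec l C i j))
        = \<i> * complex_of_real (alpha_val l C k (y_vec l C i))"
      unfolding alpha_val_def by (simp add: sum_distrib_left mult.assoc)
    also have "\<dots> = (if k = i then \<i> * pi else 0)"
      using alpha_val_y_vec[OF assms(1) True] by simp
    finally show ?thesis using True unfolding h_gen_def texp_def
      by (simp add: exp_pi_i' mult.commute)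
  next
    case False
    then show ?thesis using assms(2) unfolding h_gen_def texp_def by auto
  qed
qed

lemma tprod_h_gen:
  assumes "cartan_matrix l C" and "S \<subseteq> {..<l}"
  shows "tprod S (h_gen l C) = (\<lambda>k. if k \<in> S then -1 else 1)"
proof
  fix k
  have "finite S" using assms(2) finite_subset by blast
  have "(\<Prod>j\<in>S. h_gen l C j k) = (\<Prod>j\<in>S. if k = j then -1 else 1)"
    using h_gen_eq[OF assms(1)] assms(2) by (intro prod.cong) auto
  also have "\<dots> = (if k \<in> S then -1 else 1)"
    using prod.delta'[OF \<open>finite S\<close>, of k "\<lambda>_. -1::complex"] by simp
  finally show "tprod S (h_gen l C) k = (if k \<in> S then -1 else 1)" unfolding tprod_def .
qed

lemma h_eps_eq:
  assumes "cartan_matrix l C"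
  shows "h_eps l C e = (\<lambda>k. if k < l \<and> e k = -1 then -1 else 1)"
  unfolding h_eps_def by (subst tprod_h_gen[OF assms]) auto

lemma h_eps_of_signs:
  assumes "cartan_matrix l C" and "\<forall>k<l. e k = 1 \<or> e k = -1"
  shows "h_eps l C e = (\<lambda>k. if k < l then complex_of_real (e k) else 1)"
  unfolding h_eps_eq[OF assms(1)] using assms(2) by force

lemma h_eps_split:
  assumes "cartan_matrix l C" and "A \<subseteq> {..<l}"
  shows "h_eps l C e = tmult (tprod {j\<in>A. e j = -1} (h_gen l C))
                             (h_eps l C (\<lambda>j. if j \<in> A then 1 else e j))"
proof -
  have sub: "{j\<in>A. e j = -1} \<subseteq> {..<l}" using assms(2) by blast
  show ?thesis using assms(2)
    unfolding h_eps_eq[OF assms(1)] tprod_h_gen[OF assms(1) sub] tmult_def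
    by (intro ext) (auto simp: subset_iff)
qed

lemma tmult_in_torus: "g \<in> torus l \<Longrightarrow> h \<in> torus l \<Longrightarrow> tmult g h \<in> torus l"
  unfolding torus_def tmult_def by simp

lemma texp_in_torus: "texp l C z \<in> torus l"
  unfolding torus_def texp_def by simp

lemma h_eps_in_torus: "cartan_matrix l C \<Longrightarrow> h_eps l C e \<in> torus l"
  unfolding torus_def h_eps_eq by simp

lemma root_char_simple_root:
  assumes "k < l"
  shows "root_char l (simple_root k) h = h k"
proof -
  have "root_char l (simple_root k) h = (\<Prod>j<l. if k = j then h j else 1)"
    unfolding root_char_def simple_root_def by (intro prod.cong) auto
  also have "\<dots> = h k" using assms by simp
  finally show ?thesis .
qed

lemma root_char_root_refl_simple_root:
  assumes "k < l" and "i < l" and "h \<in> torus l"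
  shows "root_char l (root_refl l C i (simple_root k)) h = h k * h i powi (- C k i)"
proof -
  have "(\<Sum>m<l. simple_root k m * C m i) = (\<Sum>m<l. if k = m then C k i else 0)"
    by (intro sum.cong) (auto simp: simple_root_def)
  also have "\<dots> = C k i" using assms(1) by simp
  finally have pairing: "(\<Sum>m<l. simple_root k m * C m i) = C k i" .
  have "root_char l (root_refl l C i (simple_root k)) h
      = (\<Prod>j<l. h j powi (if k = j then 1 else 0) * h j powi (if i = j then - C k i else 0))"
    unfolding root_char_def
  proof (intro prod.cong refl)
    fix j assume "j \<in> {..<l}"
    then have "h j \<noteq> 0" using assms(3) by (simp add: torus_def)
    then show "h j powi root_refl l C i (simple_root k) j
       = h j powi (if k = j then 1 else 0) * h j powi (if i = j then - C k i else 0)"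
      unfolding root_refl_def pairing by (auto simp: simple_root_def power_int_add[symmetric])
  qed
  also have "\<dots> = (\<Prod>j<l. if k = j then h j else 1) * (\<Prod>j<l. if i = j then h j powi (- C k i) else 1)"
    unfolding prod.distrib by (intro arg_cong2[where f=times] prod.cong) auto
  also have "\<dots> = h k * h i powi (- C k i)" using assms(1,2) by simp
  finally show ?thesis .
qed

lemma weyl_s_eq:
  assumes "i < l" and "h \<in> torus l"
  shows "weyl_s l C i h = (\<lambda>k. if k < l then h k * h i powi (- C k i) else 1)"
  unfolding weyl_s_def using root_char_root_refl_simple_root[OF _ assms] by auto

lemma weyl_s_in_torus: "i < l \<Longrightarrow> h \<in> torus l \<Longrightarrow> weyl_s l C i h \<in> torus l"
  by (simp add: weyl_s_eq torus_def)

lemma weyl_s_tmult: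
  assumes "i < l" and "g \<in> torus l" and "h \<in> torus l"
  shows "weyl_s l C i (tmult g h) = tmult (weyl_s l C i g) (weyl_s l C i h)"
  unfolding weyl_s_eq[OF assms(1) tmult_in_torus[OF assms(2,3)]]
    weyl_s_eq[OF assms(1,2)] weyl_s_eq[OF assms(1,3)]
  unfolding tmult_def power_int_mult_distrib by (auto simp: mult_ac)

lemma weyl_s_involutive:
  assumes "cartan_matrix l C" and "i < l" and "h \<in> torus l"
  shows "weyl_s l C i (weyl_s l C i h) = h"
proof
  fix k
  have "h i \<noteq> 0" using assms(2,3) by (simp add: torus_def)
  have "weyl_s l C i h i = h i * h i powi (- 2)"
    using assms(2) cartan_matrix_diag[OF assms(1,2)] by (simp add: weyl_s_eq[OF assms(2,3)])
  also have "\<dots> = inverse (h i)"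
    using power_int_add_1'[of "h i" "- 2"] by simp
  finally have reflected_i: "weyl_s l C i h i = inverse (h i)" .
  show "weyl_s l C i (weyl_s l C i h) k = h k"
  proof (cases "k < l")
    case True
    have "weyl_s l C i (weyl_s l C i h) k = weyl_s l C i h k * inverse (h i) powi (- C k i)"
      using True by (simp add: weyl_s_eq[OF assms(2) weyl_s_in_torus[OF assms(2,3)]] reflected_i)
    also have "\<dots> = h k * (h i powi (- C k i) * inverse (h i) powi (- C k i))"
      using True by (simp add: weyl_s_eq[OF assms(2,3)] mult.assoc)
    also have "h i powi (- C k i) * inverse (h i) powi (- C k i) = 1"
      using \<open>h i \<noteq> 0\<close> by (simp add: power_int_minus power_int_inverse)
    finally show ?thesis by simp
  next
    case False
    with assms(3) show ?thesis
      by (simp add: weyl_s_eq[OF assms(2) weyl_s_in_torus[OF assms(2,3)]] torus_def)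
  qed
qed

lemma signs_mult_powi:
  "a = 1 \<or> a = -1 \<Longrightarrow> b = 1 \<or> b = -1 \<Longrightarrow> a * b powi n = 1 \<or> a * b powi n = (-1::real)"
  by (cases "even n") auto

lemma weyl_s_h_eps:
  assumes "cartan_matrix l C" and "i < l" and "\<forall>k<l. e k = 1 \<or> e k = -1"
  shows "weyl_s l C i (h_eps l C e) = h_eps l C (\<lambda>j. e j * e i powi (- C j i))"
proof -
  have signs': "\<forall>k<l. e k * e i powi (- C k i) = 1 \<or> e k * e i powi (- C k i) = -1"
    using assms(2,3) signs_mult_powi by blast
  have "weyl_s l C i (h_eps l C e)
      = (\<lambda>k. if k < l then h_eps l C e k * h_eps l C e i powi (- C k i) else 1)"
    by (rule weyl_s_eq[OF assms(2) h_eps_in_torus[OF assms(1)]])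
  also have "\<dots> = h_eps l C (\<lambda>j. e j * e i powi (- C j i))"
    using assms(2)
    unfolding h_eps_of_signs[OF assms(1,3)] h_eps_of_signs[OF assms(1) signs'] by auto
  finally show ?thesis .
qed

lemma root_char_root_refl_weyl_s:
  assumes "cartan_matrix l C" and "i < l" and "k < l" and "g \<in> torus l"
  shows "root_char l (root_refl l C i (simple_root k)) (weyl_s l C i g) = g k"
proof -
  have "weyl_s l C i (weyl_s l C i g) k = g k"
    by (simp add: weyl_s_involutive[OF assms(1,2,4)])
  then show ?thesis
    using assms(3) unfolding weyl_s_def[of l C i "weyl_s l C i g"] by simp
qed

text \<open>The reflection \<open>x \<mapsto> x - \<alpha>\<^sub>i(x) h\<^sub>\<alpha>\<^sub>i\<close> of the Cartan subalgebra, in coroot coordinates.\<close>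
definition cartan_refl :: "nat \<Rightarrow> (nat \<Rightarrow> nat \<Rightarrow> int) \<Rightarrow> nat \<Rightarrow> (nat \<Rightarrow> 'a::comm_ring_1) \<Rightarrow> nat \<Rightarrow> 'a"
  where "cartan_refl l C i x = (\<lambda>j. if j = i then x j - alpha_val l C i x else x j)"

lemma alpha_val_cartan_refl:
  assumes "i < l"
  shows "alpha_val l C k (cartan_refl l C i x) = alpha_val l C k x - alpha_val l C i x * of_int (C k i)"
proof -
  let ?a = "alpha_val l C i x"
  have "alpha_val l C k (cartan_refl l C i x)
      = (\<Sum>j<l. x j * of_int (C k j) - (if j = i then ?a * of_int (C k j) else 0))"
    unfolding alpha_val_def cartan_refl_def by (intro sum.cong) (auto simp: left_diff_distrib)
  also have "\<dots> = alpha_val l C k x - ?a * of_int (C k i)"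
    using assms unfolding alpha_val_def sum_subtractf by simp
  finally show ?thesis .
qed

lemma cartan_refl_of_real:
  "cartan_refl l C i (\<lambda>j. of_real (x j))
     = (\<lambda>j. (of_real (cartan_refl l C i x j) :: 'a::{real_algebra_1,comm_ring_1}))"
  unfolding cartan_refl_def alpha_val_of_real by auto

lemma weyl_s_texp:
  assumes "i < l"
  shows "weyl_s l C i (texp l C z) = texp l C (cartan_refl l C i z)"
proof
  fix k
  let ?a = "alpha_val l C k z" and ?b = "alpha_val l C i z"
  have "exp ?a * exp ?b powi (- C k i) = exp (?a - ?b * of_int (C k i))"
    by (simp add: exp_power_int exp_diff field_simps exp_minus)
  then show "weyl_s l C i (texp l C z) k = texp l C (cartan_refl l C i z) k"
    using assms unfolding weyl_s_eq[OF assms texp_in_torus]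
    by (simp add: texp_def alpha_val_cartan_refl)
qed

lemma weyl_s_tcoset_H_A:
  assumes "cartan_matrix l C" and "i < l" and "i \<notin> A" and "\<forall>k<l. e k = 1 \<or> e k = -1"
  shows "weyl_s l C i ` tcoset (h_eps l C e) (H_A l C A)
           \<subseteq> tcoset (h_eps l C (\<lambda>j. e j * e i powi (- C j i))) (H_A l C A)"
proof
  fix g assume "g \<in> weyl_s l C i ` tcoset (h_eps l C e) (H_A l C A)"
  then obtain x where x: "\<forall>j. (l \<le> j \<or> j \<in> A) \<longrightarrow> x j = 0"
    and g: "g = weyl_s l C i (tmult (h_eps l C e) (texp l C (\<lambda>j. complex_of_real (x j))))"
    unfolding tcoset_def H_A_def by auto
  have "g = tmult (h_eps l C (\<lambda>j. e j * e i powi (- C j i)))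
                  (texp l C (\<lambda>j. complex_of_real (cartan_refl l C i x j)))"
    unfolding g weyl_s_tmult[OF assms(2) h_eps_in_torus[OF assms(1)] texp_in_torus]
      weyl_s_h_eps[OF assms(1,2,4)] weyl_s_texp[OF assms(2)] cartan_refl_of_real ..
  moreover have "\<forall>j. (l \<le> j \<or> j \<in> A) \<longrightarrow> cartan_refl l C i x j = 0"
    using x assms(2,3) unfolding cartan_refl_def by auto
  ultimately show "g \<in> tcoset (h_eps l C (\<lambda>j. e j * e i powi (- C j i))) (H_A l C A)"
    unfolding tcoset_def H_A_def by blast
qed

lemma tcoset_h_eps_H_split_sign:
  assumes "cartan_matrix l C" and "\<forall>k<l. e k = 1 \<or> e k = -1"
    and "g \<in> tcoset (h_eps l C e) (H_split l C)" and "k < l"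
  shows "g \<in> torus l" and "g k \<in> \<real>" and "sgn (Re (g k)) = e k"
proof -
  obtain x where g: "g = tmult (h_eps l C e) (texp l C (\<lambda>j. complex_of_real (x j)))"
    using assms(3) unfolding tcoset_def H_split_def by auto
  then show "g \<in> torus l"
    using tmult_in_torus h_eps_in_torus[OF assms(1)] texp_in_torus by blast
  have "g k = of_real (e k * exp (alpha_val l C k x))"
    using assms(4) unfolding g tmult_def texp_def h_eps_of_signs[OF assms(1,2)]
    by (simp add: alpha_val_of_real exp_of_real)
  moreover have "sgn (e k * exp (alpha_val l C k x)) = e k"
    using assms(2,4) by (auto simp: sgn_mult)
  ultimately show "g k \<in> \<real>" and "sgn (Re (g k)) = e k" by simp_all
qed

lemma root_char_signs_tcoset_H_split:
  assumes "cartan_matrix l C" and "i < l" and "\<forall>k<l. e k = 1 \<or> e k = -1"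
    and "k < l" and "h \<in> tcoset (h_eps l C e) (H_split l C)"
    and "h' \<in> weyl_s l C i ` tcoset (h_eps l C e) (H_split l C)"
  shows "root_char l (simple_root k) h \<in> \<real> \<and>
         root_char l (root_refl l C i (simple_root k)) h' \<in> \<real> \<and>
         sgn (Re (root_char l (simple_root k) h)) = e k \<and>
         sgn (Re (root_char l (root_refl l C i (simple_root k)) h')) = e k"
proof -
  obtain g where g: "g \<in> tcoset (h_eps l C e) (H_split l C)" and h': "h' = weyl_s l C i g"
    using assms(6) by blast
  have g_torus: "g \<in> torus l" by (rule tcoset_h_eps_H_split_sign(1)[OF assms(1,3) g assms(4)])
  show ?thesis
    using tcoset_h_eps_H_split_sign(2,3)[OF assms(1,3,5,4)]
      tcoset_h_eps_H_split_sign(2,3)[OF assms(1,3) g assms(4)]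
    unfolding root_char_simple_root[OF assms(4)] h' root_char_root_refl_weyl_s[OF assms(1,2,4) g_torus]
    by blast
qed

theorem proposition2p2p4:
  fixes l :: nat and C :: "nat \<Rightarrow> nat \<Rightarrow> int" and A :: "nat set"
    and i :: nat and \<epsilon> :: "nat \<Rightarrow> real"
  assumes "cartan_matrix l C" and "A \<subseteq> {..<l}" and "i < l" and "i \<notin> A"
    and "\<epsilon> \<in> eps_set l A"
  defines "\<epsilon>' \<equiv> (\<lambda>j. \<epsilon> j * \<epsilon> i powi (- C j i))"
  shows
    "(\<epsilon> i = 1 \<longrightarrow> weyl_s l C i (h_eps l C \<epsilon>) = h_eps l C \<epsilon>) \<and>
     (\<epsilon> i = -1 \<longrightarrow> weyl_s l C i (h_eps l C \<epsilon>) = h_eps l C \<epsilon>' \<and>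
        (\<exists>\<epsilon>A\<in>eps_set l A. h_eps l C \<epsilon>' =
            tmult (tprod {j\<in>A. odd (C j i)} (h_gen l C)) (h_eps l C \<epsilon>A))) \<and>
     (\<epsilon> i = 1 \<longrightarrow> weyl_s l C i ` tcoset (h_eps l C \<epsilon>) (H_A l C A)
                     \<subseteq> tcoset (h_eps l C \<epsilon>) (H_A l C A)) \<and>
     (\<epsilon> i = -1 \<longrightarrow> weyl_s l C i ` tcoset (h_eps l C \<epsilon>) (H_A l C A)
                     \<subseteq> tcoset (h_eps l C \<epsilon>') (H_A l C A)) \<and>
     (\<forall>k<l. \<forall>h\<in>tcoset (h_eps l C \<epsilon>) (H_split l C).
        \<forall>h'\<in>weyl_s l C i ` tcoset (h_eps l C \<epsilon>) (H_split l C).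
          root_char l (simple_root k) h \<in> \<real> \<and>
          root_char l (root_refl l C i (simple_root k)) h' \<in> \<real> \<and>
          sgn (Re (root_char l (simple_root k) h)) = \<epsilon> k \<and>
          sgn (Re (root_char l (root_refl l C i (simple_root k)) h')) = \<epsilon> k)"
proof -
  have signs: "\<forall>k<l. \<epsilon> k = 1 \<or> \<epsilon> k = -1" and \<epsilon>_A: "\<forall>j\<in>A. \<epsilon> j = 1"
    using assms(5) unfolding eps_set_def by auto
  have weyl_h_eps: "weyl_s l C i (h_eps l C \<epsilon>) = h_eps l C \<epsilon>'"
    unfolding \<epsilon>'_def by (rule weyl_s_h_eps[OF assms(1,3) signs])
  have weyl_coset: "weyl_s l C i ` tcoset (h_eps l C \<epsilon>) (H_A l C A) \<subseteq> tcoset (h_eps l C \<epsilon>') (H_A l C A)"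
    unfolding \<epsilon>'_def by (rule weyl_s_tcoset_H_A[OF assms(1,3,4) signs])
  have \<epsilon>'_fixed: "\<epsilon>' = \<epsilon>" if "\<epsilon> i = 1"
    using that by (simp add: \<epsilon>'_def)
  have factor: "\<exists>\<epsilon>A\<in>eps_set l A. h_eps l C \<epsilon>' =
                  tmult (tprod {j\<in>A. odd (C j i)} (h_gen l C)) (h_eps l C \<epsilon>A)" if "\<epsilon> i = -1"
  proof
    have "{j\<in>A. \<epsilon>' j = -1} = {j\<in>A. odd (C j i)}"
      using \<epsilon>_A that by (auto simp: \<epsilon>'_def power_int_minus_left)
    then show "h_eps l C \<epsilon>' = tmult (tprod {j\<in>A. odd (C j i)} (h_gen l C))
                                   (h_eps l C (\<lambda>j. if j \<in> A then 1 else \<epsilon>' j))"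
      using h_eps_split[OF assms(1,2), of \<epsilon>'] by simp
    show "(\<lambda>j. if j \<in> A then 1 else \<epsilon>' j) \<in> eps_set l A"
      using signs assms(3) signs_mult_powi unfolding eps_set_def \<epsilon>'_def by auto
  qed
  show ?thesis
    using weyl_h_eps weyl_coset \<epsilon>'_fixed factor
      root_char_signs_tcoset_H_split[OF assms(1,3) signs] by auto
qed

end
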